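(* Let $\mathcal{X}=\mathcal{X}^{(1)}\times\cdots\times\mathcal{X}^{(d)}$ with each $\mathcal{X}^{(j)}$ finite, and let $(S_i)_{i=1}^n$ be a partition of $\{1,\dots,d\}$ into pairwise disjoint nonempty sets. Let $\pi\in\mathcal{P}(\mathcal{X})$ be positive, $P\in\mathcal{L}(\mathcal{X})$ and $L_i\in\mathcal{L}(\mathcal{X}^{(S_i)})$ for $i=1,\dots,n$. Then $D^\pi_{KL}(P\|\otimes_{i=1}^nL_i)=D^\pi_{KL}(P\|\otimes_{i=1}^nP^{(S_i)}_\pi)+D^\pi_{KL}(\otimes_{i=1}^nP^{(S_i)}_\pi\|\otimes_{i=1}^nL_i)=D^\pi_{KL}(P\|\otimes_{i=1}^nP^{(S_i)}_\pi)+\sum_{i=1}^nD^{\pi^{(S_i)}}_{KL}(P^{(S_i)}_\pi\|L_i)$. Consequently $\otimes_{i=1}^nP^{(S_i)}_\pi$ is the unique minimizer and $\min_{L_i\in\mathcal{L}(\mathcal{X}^{(S_i)})}D^\pi_{KL}(P\|\otimes_{i=1}^nL_i)=D^\pi_{KL}(P\|\otimes_{i=1}^nP^{(S_i)}_\pi)$.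
   Context: $\mathcal{P}(\Omega),\mathcal{L}(\Omega)$: probability masses and transition matrices on finite $\Omega$. $D_{KL}^{\pi}(M\|L):=\sum_{x,y}\pi(x)M(x,y)\ln\frac{M(x,y)}{L(x,y)}$. For $S\subseteq\{1,\dots,d\}$: $\mathcal{X}^{(S)}=\prod_{j\in S}\mathcal{X}^{(j)}$, $x^{(S)}=(x^j)_{j\in S}$, $x^{(-S)}=(x^j)_{j\notin S}$, $\pi^{(S)}(x^{(S)})=\sum_{x^{(-S)}}\pi(x)$, $P^{(S)}_\pi(x^{(S)},y^{(S)}):=\frac{\sum_{x^{(-S)},y^{(-S)}}\pi(x)P(x,y)}{\pi^{(S)}(x^{(S)})}$. For $L_i\in\mathcal{L}(\mathcal{X}^{(S_i)})$, $(\otimes_{i=1}^nL_i)(x,y):=\prod_{i=1}^nL_i(x^{(S_i)},y^{(S_i)})$. *)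

theory Defs
  imports "HOL-Analysis.Analysis" "HOL-Library.FuncSet"
begin

definition prob_mass :: "'s set \<Rightarrow> ('s \<Rightarrow> real) \<Rightarrow> bool" where
  "prob_mass \<Omega> \<pi> \<longleftrightarrow> (\<forall>x\<in>\<Omega>. 0 \<le> \<pi> x) \<and> (\<Sum>x\<in>\<Omega>. \<pi> x) = 1"

definition trans_matrix :: "'s set \<Rightarrow> ('s \<Rightarrow> 's \<Rightarrow> real) \<Rightarrow> bool" where
  "trans_matrix \<Omega> M \<longleftrightarrow> (\<forall>x\<in>\<Omega>. \<forall>y\<in>\<Omega>. 0 \<le> M x y) \<and> (\<forall>x\<in>\<Omega>. (\<Sum>y\<in>\<Omega>. M x y) = 1)"

definition kl_term :: "real \<Rightarrow> real \<Rightarrow> real \<Rightarrow> ereal" where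
  "kl_term w m l = (if w * m = 0 then 0 else if l = 0 then \<infinity> else ereal (w * m * ln (m / l)))"

definition KL :: "'s set \<Rightarrow> ('s \<Rightarrow> real) \<Rightarrow> ('s \<Rightarrow> 's \<Rightarrow> real) \<Rightarrow> ('s \<Rightarrow> 's \<Rightarrow> real) \<Rightarrow> ereal" where
  "KL \<Omega> \<pi> M L = (\<Sum>x\<in>\<Omega>. \<Sum>y\<in>\<Omega>. kl_term (\<pi> x) (M x y) (L x y))"

text \<open>Product state space: states are extensional functions on the coordinate set.
  \<open>X\<^sup>(S) = PiE S X\<close>, \<open>x\<^sup>(S) = restrict x S\<close>, full space \<open>PiE {1..d} X\<close>.\<close>

definition marg_pi :: "nat \<Rightarrow> (nat \<Rightarrow> 'a set) \<Rightarrow> nat set \<Rightarrow> ((nat \<Rightarrow> 'a) \<Rightarrow> real) \<Rightarrow> (nat \<Rightarrow> 'a) \<Rightarrow> real" where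
  "marg_pi d X S \<pi> u = (\<Sum>x\<in>{x\<in>PiE {1..d} X. restrict x S = u}. \<pi> x)"

definition marg_P :: "nat \<Rightarrow> (nat \<Rightarrow> 'a set) \<Rightarrow> nat set \<Rightarrow> ((nat \<Rightarrow> 'a) \<Rightarrow> real)
    \<Rightarrow> ((nat \<Rightarrow> 'a) \<Rightarrow> (nat \<Rightarrow> 'a) \<Rightarrow> real) \<Rightarrow> (nat \<Rightarrow> 'a) \<Rightarrow> (nat \<Rightarrow> 'a) \<Rightarrow> real" where
  "marg_P d X S \<pi> P u v =
     (\<Sum>x\<in>{x\<in>PiE {1..d} X. restrict x S = u}. \<Sum>y\<in>{y\<in>PiE {1..d} X. restrict y S = v}. \<pi> x * P x y)
       / marg_pi d X S \<pi> u"

definition tensor :: "nat \<Rightarrow> (nat \<Rightarrow> nat set) \<Rightarrow> (nat \<Rightarrow> (nat \<Rightarrow> 'a) \<Rightarrow> (nat \<Rightarrow> 'a) \<Rightarrow> real)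
    \<Rightarrow> (nat \<Rightarrow> 'a) \<Rightarrow> (nat \<Rightarrow> 'a) \<Rightarrow> real" where
  "tensor n S L x y = (\<Prod>i\<in>{1..n}. L i (restrict x (S i)) (restrict y (S i)))"

end

theory Submission
  imports Defs
begin

(* The logarithm of a product kernel is a sum over the blocks.  Integrating the block term
   ln (P_i / L_i)(x^(S_i), y^(S_i)) against pi(x) P(x,y), or against pi(x) times the product of the
   marginal kernels P_i, gives the same block divergence D^(pi^(S_i))(P_i || L_i), because both
   kernels have S_i-marginal P_i.  Each block divergence is
   nonnegative by Gibbs' inequality and vanishes only at L_i = P_i, which gives the unique minimiser.
   If some L_i vanishes where P_i does not, all divergences involved are infinite. *)

(* Meaningful only when N x y = 0 forces \<pi> x * M x y = 0: otherwise x / 0 = 0 hides the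
   infinite term of KL. *)
definition KL_real :: "'s set \<Rightarrow> ('s \<Rightarrow> real) \<Rightarrow> ('s \<Rightarrow> 's \<Rightarrow> real) \<Rightarrow> ('s \<Rightarrow> 's \<Rightarrow> real) \<Rightarrow> real" where
  "KL_real \<Omega> \<pi> M N = (\<Sum>x\<in>\<Omega>. \<Sum>y\<in>\<Omega>. \<pi> x * M x y * ln (M x y / N x y))"

lemma KL_eq_KL_real:
  assumes "\<And>x y. x \<in> \<Omega> \<Longrightarrow> y \<in> \<Omega> \<Longrightarrow> \<pi> x * M x y \<noteq> 0 \<Longrightarrow> N x y \<noteq> 0"
  shows "KL \<Omega> \<pi> M N = ereal (KL_real \<Omega> \<pi> M N)"
  unfolding KL_def KL_real_def kl_term_def sum_ereal[symmetric] using assms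
  by (intro sum.cong refl) auto

lemma KL_eq_infinity:
  assumes "finite \<Omega>" "x \<in> \<Omega>" "y \<in> \<Omega>" "\<pi> x * M x y \<noteq> 0" "N x y = 0"
  shows "KL \<Omega> \<pi> M N = \<infinity>"
  unfolding KL_def using assms by (auto simp: sum_Pinfty kl_term_def)

lemma diff_le_mult_ln_div:
  fixes p q :: real
  assumes "0 \<le> p" "0 \<le> q" "p \<noteq> 0 \<Longrightarrow> q \<noteq> 0"
  shows "p - q \<le> p * ln (p / q)"
    and "p * ln (p / q) = p - q \<Longrightarrow> p = q"
proof -
  consider "p = 0" | "p > 0" "q > 0" using assms by fastforce
  then have "p - q \<le> p * ln (p / q) \<and> (p * ln (p / q) = p - q \<longrightarrow> p = q)"
  proof cases
    case 2
    have "ln (q / p) \<le> q / p - 1" using 2 by (intro ln_le_minus_one) simp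
    moreover have "ln (q / p) = q / p - 1 \<Longrightarrow> q / p = 1" using 2 by (intro ln_eq_minus_one) auto
    moreover have "p * ln (p / q) = - p * ln (q / p)" using 2 by (simp add: ln_div algebra_simps)
    ultimately show ?thesis using 2 by (auto simp: field_simps)
  qed (use assms in auto)
  then show "p - q \<le> p * ln (p / q)" and "p * ln (p / q) = p - q \<Longrightarrow> p = q" by auto
qed

lemma gibbs_inequality:
  fixes p q :: "'b \<Rightarrow> real"
  assumes "finite A" "\<And>a. a \<in> A \<Longrightarrow> 0 \<le> p a" "\<And>a. a \<in> A \<Longrightarrow> 0 \<le> q a"
    "sum p A = 1" "sum q A = 1" "\<And>a. a \<in> A \<Longrightarrow> p a \<noteq> 0 \<Longrightarrow> q a \<noteq> 0"
  shows "0 \<le> (\<Sum>a\<in>A. p a * ln (p a / q a))"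
    and "(\<Sum>a\<in>A. p a * ln (p a / q a)) = 0 \<Longrightarrow> \<forall>a\<in>A. p a = q a"
proof -
  have pointwise: "0 \<le> p a * ln (p a / q a) - (p a - q a)" if "a \<in> A" for a
    using diff_le_mult_ln_div(1)[OF assms(2,3,6)] that by simp
  have sum_eq: "(\<Sum>a\<in>A. p a * ln (p a / q a)) = (\<Sum>a\<in>A. p a * ln (p a / q a) - (p a - q a))"
    using assms(4,5) by (simp add: sum_subtractf)
  show "0 \<le> (\<Sum>a\<in>A. p a * ln (p a / q a))"
    unfolding sum_eq using pointwise by (rule sum_nonneg)
  assume "(\<Sum>a\<in>A. p a * ln (p a / q a)) = 0"
  then have "(\<Sum>a\<in>A. p a * ln (p a / q a) - (p a - q a)) = 0" by (simp only: sum_eq)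
  then have "\<forall>a\<in>A. p a * ln (p a / q a) - (p a - q a) = 0"
    using pointwise by (simp add: sum_nonneg_eq_0_iff[OF assms(1)])
  then show "\<forall>a\<in>A. p a = q a"
    using diff_le_mult_ln_div(2)[OF assms(2,3,6)] by simp
qed

lemma
  assumes "finite \<Omega>" "\<And>x. x \<in> \<Omega> \<Longrightarrow> 0 < \<pi> x" "trans_matrix \<Omega> M" "trans_matrix \<Omega> N"
  shows KL_nonneg: "0 \<le> KL \<Omega> \<pi> M N"
    and KL_eq_0_imp_eq: "KL \<Omega> \<pi> M N = 0 \<Longrightarrow> \<forall>x\<in>\<Omega>. \<forall>y\<in>\<Omega>. M x y = N x y"
proof -
  have "0 \<le> KL \<Omega> \<pi> M N \<and> (KL \<Omega> \<pi> M N = 0 \<longrightarrow> (\<forall>x\<in>\<Omega>. \<forall>y\<in>\<Omega>. M x y = N x y))"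
  proof (cases "\<exists>x\<in>\<Omega>. \<exists>y\<in>\<Omega>. M x y \<noteq> 0 \<and> N x y = 0")
    case True
    then obtain x y where "x \<in> \<Omega>" "y \<in> \<Omega>" "M x y \<noteq> 0" "N x y = 0" by blast
    moreover have "\<pi> x \<noteq> 0" using assms(2)[OF \<open>x \<in> \<Omega>\<close>] by simp
    ultimately have "KL \<Omega> \<pi> M N = \<infinity>" by (intro KL_eq_infinity[OF assms(1)]) auto
    then show ?thesis by simp
  next
    case False
    define r where "r x = (\<Sum>y\<in>\<Omega>. M x y * ln (M x y / N x y))" for x
    have row: "0 \<le> r x" "r x = 0 \<Longrightarrow> \<forall>y\<in>\<Omega>. M x y = N x y" if "x \<in> \<Omega>" for x
    proof -
      have "\<And>y. y \<in> \<Omega> \<Longrightarrow> 0 \<le> M x y" "\<And>y. y \<in> \<Omega> \<Longrightarrow> 0 \<le> N x y"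
        "sum (M x) \<Omega> = 1" "sum (N x) \<Omega> = 1"
        using assms(3,4) that by (auto simp: trans_matrix_def)
      moreover have "\<And>y. y \<in> \<Omega> \<Longrightarrow> M x y \<noteq> 0 \<Longrightarrow> N x y \<noteq> 0" using False that by blast
      ultimately show "0 \<le> r x" "r x = 0 \<Longrightarrow> \<forall>y\<in>\<Omega>. M x y = N x y"
        unfolding r_def using gibbs_inequality[OF assms(1)] by blast+
    qed
    have "KL \<Omega> \<pi> M N = ereal (\<Sum>x\<in>\<Omega>. \<pi> x * r x)"
      using False by (subst KL_eq_KL_real) (auto simp: KL_real_def r_def sum_distrib_left mult.assoc)
    moreover have terms_nonneg: "0 \<le> \<pi> x * r x" if "x \<in> \<Omega>" for x
      using assms(2) row(1) that by (simp add: less_imp_le)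
    moreover have "\<forall>x\<in>\<Omega>. r x = 0" if "(\<Sum>x\<in>\<Omega>. \<pi> x * r x) = 0"
      using that terms_nonneg assms(1,2) by (subst (asm) sum_nonneg_eq_0_iff) force+
    ultimately show ?thesis
      using row by (auto intro: sum_nonneg)
  qed
  then show "0 \<le> KL \<Omega> \<pi> M N" and "KL \<Omega> \<pi> M N = 0 \<Longrightarrow> \<forall>x\<in>\<Omega>. \<forall>y\<in>\<Omega>. M x y = N x y" by auto
qed

lemma bij_betw_restrict_blocks:
  assumes disj: "\<And>i k. i \<in> I \<Longrightarrow> k \<in> I \<Longrightarrow> i \<noteq> k \<Longrightarrow> S i \<inter> S k = {}"
  shows "bij_betw (\<lambda>y. \<lambda>k\<in>I. restrict y (S k)) (PiE (\<Union>k\<in>I. S k) X) (PiE I (\<lambda>k. PiE (S k) X))"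
proof -
  define block where "block j = (SOME k. k \<in> I \<and> j \<in> S k)" for j
  have block: "block j = k" if "k \<in> I" "j \<in> S k" for j k
  proof -
    have "block j \<in> I \<and> j \<in> S (block j)"
      unfolding block_def using someI[of "\<lambda>k. k \<in> I \<and> j \<in> S k" k] that by blast
    then show ?thesis using disj[of "block j" k] that by blast
  qed
  show ?thesis
  proof (rule bij_betw_byWitness[where f' = "\<lambda>w. \<lambda>j\<in>\<Union>k\<in>I. S k. w (block j) j"])
    show "\<forall>y\<in>PiE (\<Union>k\<in>I. S k) X. (\<lambda>j\<in>\<Union>k\<in>I. S k. (\<lambda>k\<in>I. restrict y (S k)) (block j) j) = y"
    proof (intro ballI ext)
      fix y j assume y: "y \<in> PiE (\<Union>k\<in>I. S k) X"
      show "(\<lambda>j\<in>\<Union>k\<in>I. S k. (\<lambda>k\<in>I. restrict y (S k)) (block j) j) j = y j"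
        using block PiE_arb[OF y] by (cases "j \<in> (\<Union>k\<in>I. S k)") auto
    qed
    show "\<forall>w\<in>PiE I (\<lambda>k. PiE (S k) X). (\<lambda>k\<in>I. restrict (\<lambda>j\<in>\<Union>k\<in>I. S k. w (block j) j) (S k)) = w"
    proof (intro ballI ext)
      fix w k j assume w: "w \<in> PiE I (\<lambda>k. PiE (S k) X)"
      show "(\<lambda>k\<in>I. restrict (\<lambda>j\<in>\<Union>k\<in>I. S k. w (block j) j) (S k)) k j = w k j"
      proof (cases "k \<in> I")
        case True
        then have "w k \<in> PiE (S k) X" using w by blast
        then show ?thesis using True block PiE_arb[of "w k"] by (cases "j \<in> S k") auto
      qed (simp add: PiE_arb[OF w])
    qed
    show "(\<lambda>y. \<lambda>k\<in>I. restrict y (S k)) ` PiE (\<Union>k\<in>I. S k) X \<subseteq> PiE I (\<lambda>k. PiE (S k) X)"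
      by auto
    show "(\<lambda>w. \<lambda>j\<in>\<Union>k\<in>I. S k. w (block j) j) ` PiE I (\<lambda>k. PiE (S k) X) \<subseteq> PiE (\<Union>k\<in>I. S k) X"
      using block by (auto simp: PiE_iff)
  qed
qed

lemma sum_prod_restrict_blocks:
  fixes g :: "'i \<Rightarrow> ('j \<Rightarrow> 'a) \<Rightarrow> 'b::comm_semiring_1"
  assumes "finite I" "\<And>k. k \<in> I \<Longrightarrow> finite (PiE (S k) X)"
    and disj: "\<And>i k. i \<in> I \<Longrightarrow> k \<in> I \<Longrightarrow> i \<noteq> k \<Longrightarrow> S i \<inter> S k = {}"
  shows "(\<Sum>y\<in>PiE (\<Union>k\<in>I. S k) X. \<Prod>k\<in>I. g k (restrict y (S k))) = (\<Prod>k\<in>I. \<Sum>w\<in>PiE (S k) X. g k w)"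
proof -
  have "(\<Sum>y\<in>PiE (\<Union>k\<in>I. S k) X. \<Prod>k\<in>I. g k (restrict y (S k)))
      = (\<Sum>w\<in>PiE I (\<lambda>k. PiE (S k) X). \<Prod>k\<in>I. g k (w k))"
    by (subst sum.reindex_bij_betw[OF bij_betw_restrict_blocks[OF disj], symmetric])
      (auto intro!: sum.cong prod.cong)
  also have "\<dots> = (\<Prod>k\<in>I. \<Sum>w\<in>PiE (S k) X. g k w)"
    using assms(1,2) by (rule prod_sum_PiE[symmetric])
  finally show ?thesis .
qed

lemma tensor_pos:
  assumes "\<And>i. i \<in> {1..n} \<Longrightarrow> 0 < L i (restrict x (S i)) (restrict y (S i))"
  shows "0 < tensor n S L x y"
  unfolding tensor_def using assms by (rule prod_pos)

lemma tensor_eq_0_iff: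
  "tensor n S L x y = 0 \<longleftrightarrow> (\<exists>i\<in>{1..n}. L i (restrict x (S i)) (restrict y (S i)) = 0)"
  unfolding tensor_def by (simp add: prod_zero_iff)

lemma ln_tensor_div:
  assumes "\<And>i. i \<in> {1..n} \<Longrightarrow> A i (restrict x (S i)) (restrict y (S i)) \<noteq> 0"
    and "\<And>i. i \<in> {1..n} \<Longrightarrow> B i (restrict x (S i)) (restrict y (S i)) \<noteq> 0"
  shows "ln (tensor n S A x y / tensor n S B x y)
       = (\<Sum>i\<in>{1..n}. ln (A i (restrict x (S i)) (restrict y (S i)) / B i (restrict x (S i)) (restrict y (S i))))"
proof -
  have "tensor n S A x y / tensor n S B x y
      = (\<Prod>i\<in>{1..n}. A i (restrict x (S i)) (restrict y (S i)) / B i (restrict x (S i)) (restrict y (S i)))"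
    by (simp add: tensor_def prod_dividef)
  moreover have ratio_ne_0: "A i (restrict x (S i)) (restrict y (S i)) / B i (restrict x (S i)) (restrict y (S i)) \<noteq> 0"
    if "i \<in> {1..n}" for i
    using assms that by simp
  ultimately show ?thesis
    using ln_prod[OF finite_atLeastAtMost ratio_ne_0] by simp
qed

locale block_partition =
  fixes d n :: nat and X :: "nat \<Rightarrow> 'a set" and S :: "nat \<Rightarrow> nat set"
  assumes finite_X: "\<And>j. j \<in> {1..d} \<Longrightarrow> finite (X j)"
    and S_disjoint: "\<And>i k. i \<in> {1..n} \<Longrightarrow> k \<in> {1..n} \<Longrightarrow> i \<noteq> k \<Longrightarrow> S i \<inter> S k = {}"
    and S_cover: "(\<Union>i\<in>{1..n}. S i) = {1..d}"
    and state_space_nonempty: "PiE {1..d} X \<noteq> {}"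
begin

abbreviation state_space where "state_space \<equiv> PiE {1..d} X"
abbreviation block_space where "block_space i \<equiv> PiE (S i) X"
abbreviation fibre where "fibre i u \<equiv> {x \<in> state_space. restrict x (S i) = u}"

lemma finite_state_space: "finite state_space"
  using finite_X by (intro finite_PiE) auto

lemma block_subset: "i \<in> {1..n} \<Longrightarrow> S i \<subseteq> {1..d}"
  using S_cover by blast

lemma finite_block_space: "i \<in> {1..n} \<Longrightarrow> finite (block_space i)"
  using block_subset finite_X by (intro finite_PiE finite_subset[OF block_subset]) blast+

lemma finite_fibre: "finite (fibre i u)"
  using finite_state_space by simp

lemma restrict_in_block_space: "x \<in> state_space \<Longrightarrow> i \<in> {1..n} \<Longrightarrow> restrict x (S i) \<in> block_space i"
  using block_subset by (auto simp: PiE_iff)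

lemma fibre_nonempty:
  assumes i: "i \<in> {1..n}" and u: "u \<in> block_space i"
  shows "fibre i u \<noteq> {}"
proof -
  obtain z where z: "z \<in> state_space" using state_space_nonempty by blast
  define x where "x j = (if j \<in> S i then u j else z j)" for j
  have "x \<in> state_space"
    using u z block_subset[OF i] PiE_arb[OF z] by (auto simp: x_def PiE_iff extensional_def)
  moreover have "restrict x (S i) = u"
    using PiE_arb[OF u] by (auto simp: x_def fun_eq_iff)
  ultimately show ?thesis by blast
qed

lemma sum_over_fibres:
  assumes "i \<in> {1..n}"
  shows "(\<Sum>x\<in>state_space. f x) = (\<Sum>u\<in>block_space i. \<Sum>x\<in>fibre i u. f x)"
proof -
  have "(\<lambda>x. restrict x (S i)) ` state_space \<subseteq> block_space i"
    using restrict_in_block_space[OF _ assms] by blast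
  from sum.group[OF finite_state_space finite_block_space[OF assms] this, of f] show ?thesis
    by (rule sym)
qed

lemma sum_fibre_tensor:
  assumes i: "i \<in> {1..n}" and x: "x \<in> state_space" and v: "v \<in> block_space i"
    and Q_rows: "\<And>k u. k \<in> {1..n} \<Longrightarrow> u \<in> block_space k \<Longrightarrow> (\<Sum>w\<in>block_space k. Q k u w) = 1"
  shows "(\<Sum>y\<in>fibre i v. tensor n S Q x y) = Q i (restrict x (S i)) v"
proof -
  define g where "g k w = (if k \<noteq> i \<or> w = v then Q k (restrict x (S k)) w else 0)" for k w
  have "(\<Prod>k\<in>{1..n}. g k (restrict y (S k))) = (if restrict y (S i) = v then tensor n S Q x y else 0)"
    for y
  proof (cases "restrict y (S i) = v")
    case True
    then show ?thesis by (auto simp: g_def tensor_def intro: prod.cong)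
  next
    case False
    then show ?thesis using i by (auto simp: g_def prod_zero_iff)
  qed
  then have "(\<Sum>y\<in>fibre i v. tensor n S Q x y) = (\<Sum>y\<in>state_space. \<Prod>k\<in>{1..n}. g k (restrict y (S k)))"
    by (subst sum.inter_filter[OF finite_state_space]) simp
  also have "\<dots> = (\<Prod>k\<in>{1..n}. \<Sum>w\<in>block_space k. g k w)"
    unfolding S_cover[symmetric]
    by (rule sum_prod_restrict_blocks[OF finite_atLeastAtMost finite_block_space S_disjoint])
  also have "\<dots> = (\<Prod>k\<in>{1..n}. if k = i then Q i (restrict x (S i)) v else 1)"
  proof (rule prod.cong[OF refl])
    fix k assume k: "k \<in> {1..n}"
    show "(\<Sum>w\<in>block_space k. g k w) = (if k = i then Q i (restrict x (S i)) v else 1)"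
      using Q_rows[OF k restrict_in_block_space[OF x k]] v finite_block_space[OF k]
      by (cases "k = i") (simp_all add: g_def)
  qed
  also have "\<dots> = Q i (restrict x (S i)) v"
    using i by simp
  finally show ?thesis .
qed

end

locale block_kernel = block_partition d n X S
  for d n :: nat and X :: "nat \<Rightarrow> 'a set" and S :: "nat \<Rightarrow> nat set" +
  fixes \<pi> :: "(nat \<Rightarrow> 'a) \<Rightarrow> real" and P :: "(nat \<Rightarrow> 'a) \<Rightarrow> (nat \<Rightarrow> 'a) \<Rightarrow> real"
  assumes pi_pos: "\<And>x. x \<in> PiE {1..d} X \<Longrightarrow> 0 < \<pi> x"
    and P_trans_matrix: "trans_matrix (PiE {1..d} X) P"
begin

abbreviation pi_marg where "pi_marg i \<equiv> marg_pi d X (S i) \<pi>"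
abbreviation kernel_marg where "kernel_marg i K \<equiv> marg_P d X (S i) \<pi> K"
abbreviation P_marg where "P_marg i \<equiv> kernel_marg i P"

lemma P_nonneg: "x \<in> state_space \<Longrightarrow> y \<in> state_space \<Longrightarrow> 0 \<le> P x y"
  using P_trans_matrix by (simp add: trans_matrix_def)

lemma pi_marg_pos: "i \<in> {1..n} \<Longrightarrow> u \<in> block_space i \<Longrightarrow> 0 < pi_marg i u"
  unfolding marg_pi_def using fibre_nonempty pi_pos by (intro sum_pos finite_fibre) auto

lemma pi_marg_mult_kernel_marg:
  "i \<in> {1..n} \<Longrightarrow> u \<in> block_space i \<Longrightarrow>
     pi_marg i u * kernel_marg i K u v = (\<Sum>x\<in>fibre i u. \<Sum>y\<in>fibre i v. \<pi> x * K x y)"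
  using pi_marg_pos[of i u] by (simp add: marg_P_def)

lemma sum_restrict_eq_sum_marg:
  assumes i: "i \<in> {1..n}"
  shows "(\<Sum>x\<in>state_space. \<Sum>y\<in>state_space. \<pi> x * K x y * h (restrict x (S i)) (restrict y (S i)))
       = (\<Sum>u\<in>block_space i. \<Sum>v\<in>block_space i. pi_marg i u * kernel_marg i K u v * h u v)"
proof -
  have inner: "(\<Sum>y\<in>state_space. \<pi> x * K x y * h u (restrict y (S i)))
      = (\<Sum>v\<in>block_space i. \<Sum>y\<in>fibre i v. \<pi> x * K x y * h u v)" for x u
    using sum_over_fibres[OF i, of "\<lambda>y. \<pi> x * K x y * h u (restrict y (S i))"] by simp
  have "(\<Sum>x\<in>state_space. \<Sum>y\<in>state_space. \<pi> x * K x y * h (restrict x (S i)) (restrict y (S i)))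
      = (\<Sum>u\<in>block_space i. \<Sum>x\<in>fibre i u. \<Sum>y\<in>state_space. \<pi> x * K x y * h u (restrict y (S i)))"
    using sum_over_fibres[OF i, of "\<lambda>x. \<Sum>y\<in>state_space. \<pi> x * K x y * h (restrict x (S i)) (restrict y (S i))"]
    by simp
  also have "\<dots> = (\<Sum>u\<in>block_space i. \<Sum>x\<in>fibre i u. \<Sum>v\<in>block_space i. \<Sum>y\<in>fibre i v. \<pi> x * K x y * h u v)"
    by (simp only: inner)
  also have "\<dots> = (\<Sum>u\<in>block_space i. \<Sum>v\<in>block_space i. \<Sum>x\<in>fibre i u. \<Sum>y\<in>fibre i v. \<pi> x * K x y * h u v)"
    by (intro sum.cong refl sum.swap)
  also have "\<dots> = (\<Sum>u\<in>block_space i. \<Sum>v\<in>block_space i. pi_marg i u * kernel_marg i K u v * h u v)"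
    by (intro sum.cong refl) (simp add: pi_marg_mult_kernel_marg[OF i] sum_distrib_right)
  finally show ?thesis .
qed

lemma kernel_marg_tensor:
  assumes i: "i \<in> {1..n}" and u: "u \<in> block_space i" and v: "v \<in> block_space i"
    and Q_rows: "\<And>k u. k \<in> {1..n} \<Longrightarrow> u \<in> block_space k \<Longrightarrow> (\<Sum>w\<in>block_space k. Q k u w) = 1"
  shows "kernel_marg i (tensor n S Q) u v = Q i u v"
proof -
  have "pi_marg i u * kernel_marg i (tensor n S Q) u v
      = (\<Sum>x\<in>fibre i u. \<pi> x * (\<Sum>y\<in>fibre i v. tensor n S Q x y))"
    by (simp add: pi_marg_mult_kernel_marg[OF i u] sum_distrib_left)
  also have "\<dots> = (\<Sum>x\<in>fibre i u. \<pi> x * Q i u v)"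
    using sum_fibre_tensor[OF i _ v Q_rows] by (intro sum.cong) auto
  also have "\<dots> = pi_marg i u * Q i u v"
    by (simp add: marg_pi_def sum_distrib_right)
  finally show ?thesis
    using pi_marg_pos[OF i u] by simp
qed

lemma P_marg_trans_matrix:
  assumes i: "i \<in> {1..n}"
  shows "trans_matrix (block_space i) (P_marg i)"
  unfolding trans_matrix_def
proof (intro conjI ballI)
  fix u v assume u: "u \<in> block_space i"
  have "0 \<le> pi_marg i u * P_marg i u v"
    unfolding pi_marg_mult_kernel_marg[OF i u] using pi_pos P_nonneg
    by (intro sum_nonneg mult_nonneg_nonneg) (auto intro: less_imp_le)
  then show "0 \<le> P_marg i u v"
    using pi_marg_pos[OF i u] by (simp add: zero_le_mult_iff)
next
  fix u assume u: "u \<in> block_space i"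
  have "pi_marg i u * (\<Sum>v\<in>block_space i. P_marg i u v)
      = (\<Sum>v\<in>block_space i. \<Sum>x\<in>fibre i u. \<Sum>y\<in>fibre i v. \<pi> x * P x y)"
    by (simp add: sum_distrib_left pi_marg_mult_kernel_marg[OF i u])
  also have "\<dots> = (\<Sum>x\<in>fibre i u. \<Sum>v\<in>block_space i. \<Sum>y\<in>fibre i v. \<pi> x * P x y)"
    by (rule sum.swap)
  also have "\<dots> = (\<Sum>x\<in>fibre i u. \<pi> x)"
  proof (rule sum.cong[OF refl])
    fix x assume "x \<in> fibre i u"
    then have "(\<Sum>y\<in>state_space. P x y) = 1"
      using P_trans_matrix by (simp add: trans_matrix_def)
    then have "(\<Sum>y\<in>state_space. \<pi> x * P x y) = \<pi> x"
      by (simp add: sum_distrib_left[symmetric])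
    then show "(\<Sum>v\<in>block_space i. \<Sum>y\<in>fibre i v. \<pi> x * P x y) = \<pi> x"
      by (simp only: sum_over_fibres[OF i, symmetric])
  qed
  also have "\<dots> = pi_marg i u"
    by (simp add: marg_pi_def)
  finally show "(\<Sum>v\<in>block_space i. P_marg i u v) = 1"
    using pi_marg_pos[OF i u] by simp
qed

lemma P_marg_pos:
  assumes i: "i \<in> {1..n}" and x: "x \<in> state_space" and y: "y \<in> state_space" and "0 < P x y"
  shows "0 < P_marg i (restrict x (S i)) (restrict y (S i))"
proof -
  let ?u = "restrict x (S i)" and ?v = "restrict y (S i)"
  have nonneg: "0 \<le> \<pi> x' * P x' y'" if "x' \<in> state_space" "y' \<in> state_space" for x' y'
    using pi_pos[OF that(1)] P_nonneg[OF that] by simp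
  have "0 < \<pi> x * P x y"
    using pi_pos[OF x] assms(4) by simp
  also have "\<dots> \<le> (\<Sum>y'\<in>fibre i ?v. \<pi> x * P x y')"
    using x y nonneg by (intro member_le_sum finite_fibre) auto
  also have "\<dots> \<le> (\<Sum>x'\<in>fibre i ?u. \<Sum>y'\<in>fibre i ?v. \<pi> x' * P x' y')"
    using x nonneg by (intro member_le_sum[where f = "\<lambda>x'. \<Sum>y'\<in>fibre i ?v. \<pi> x' * P x' y'"] sum_nonneg finite_fibre) auto
  also have "\<dots> = pi_marg i ?u * P_marg i ?u ?v"
    using pi_marg_mult_kernel_marg[OF i restrict_in_block_space[OF x i]] by simp
  finally show ?thesis
    using pi_marg_pos[OF i restrict_in_block_space[OF x i]] by (simp add: zero_less_mult_iff)
qed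

lemma P_marg_nonzero_imp_P_nonzero:
  assumes i: "i \<in> {1..n}" and u: "u \<in> block_space i" and "P_marg i u v \<noteq> 0"
  obtains x y where "x \<in> fibre i u" "y \<in> fibre i v" "P x y \<noteq> 0"
proof -
  have "pi_marg i u * P_marg i u v \<noteq> 0"
    using pi_marg_pos[OF i u] assms(3) by simp
  then have "(\<Sum>x\<in>fibre i u. \<Sum>y\<in>fibre i v. \<pi> x * P x y) \<noteq> 0"
    by (metis pi_marg_mult_kernel_marg[OF i u])
  then show ?thesis
    using that by (metis (no_types, lifting) mult_zero_right sum.neutral)
qed

lemma tensor_P_marg_pos:
  assumes x: "x \<in> state_space" and y: "y \<in> state_space" and "P x y \<noteq> 0"
  shows "0 < tensor n S P_marg x y"
proof (rule tensor_pos)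
  have "0 < P x y"
    using P_nonneg[OF x y] assms(3) by simp
  then show "0 < P_marg i (restrict x (S i)) (restrict y (S i))" if "i \<in> {1..n}" for i
    using P_marg_pos[OF that x y] by simp
qed

lemma KL_P_tensor_P_marg_eq_ereal:
  "KL state_space \<pi> P (tensor n S P_marg) = ereal (KL_real state_space \<pi> P (tensor n S P_marg))"
proof (rule KL_eq_KL_real)
  fix x y assume "x \<in> state_space" "y \<in> state_space" "\<pi> x * P x y \<noteq> 0"
  then show "tensor n S P_marg x y \<noteq> 0"
    using tensor_P_marg_pos[of x y] by simp
qed

lemma sum_ln_tensor_ratio:
  assumes abs_cont: "\<And>i u v. i \<in> {1..n} \<Longrightarrow> u \<in> block_space i \<Longrightarrow> v \<in> block_space i \<Longrightarrow>
      P_marg i u v \<noteq> 0 \<Longrightarrow> L i u v \<noteq> 0"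
    and K_supp: "\<And>x y. x \<in> state_space \<Longrightarrow> y \<in> state_space \<Longrightarrow> K x y \<noteq> 0 \<Longrightarrow>
      tensor n S P_marg x y \<noteq> 0"
  shows "(\<Sum>x\<in>state_space. \<Sum>y\<in>state_space. \<pi> x * K x y * ln (tensor n S P_marg x y / tensor n S L x y))
       = (\<Sum>i\<in>{1..n}. \<Sum>u\<in>block_space i. \<Sum>v\<in>block_space i.
            pi_marg i u * kernel_marg i K u v * ln (P_marg i u v / L i u v))"
proof -
  have pointwise: "\<pi> x * K x y * ln (tensor n S P_marg x y / tensor n S L x y)
      = (\<Sum>i\<in>{1..n}. \<pi> x * K x y * ln (P_marg i (restrict x (S i)) (restrict y (S i))
                                           / L i (restrict x (S i)) (restrict y (S i))))"
    if x: "x \<in> state_space" and y: "y \<in> state_space" for x y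
  proof (cases "K x y = 0")
    case False
    have P_marg_ne: "P_marg i (restrict x (S i)) (restrict y (S i)) \<noteq> 0" if i: "i \<in> {1..n}" for i
      using K_supp[OF x y False] i by (simp add: tensor_eq_0_iff)
    have "L i (restrict x (S i)) (restrict y (S i)) \<noteq> 0" if i: "i \<in> {1..n}" for i
      using abs_cont[OF i restrict_in_block_space[OF x i] restrict_in_block_space[OF y i] P_marg_ne[OF i]] .
    then have "ln (tensor n S P_marg x y / tensor n S L x y)
        = (\<Sum>i\<in>{1..n}. ln (P_marg i (restrict x (S i)) (restrict y (S i))
                                / L i (restrict x (S i)) (restrict y (S i))))"
      using P_marg_ne by (intro ln_tensor_div)
    then show ?thesis
      by (simp add: sum_distrib_left)
  qed simp
  have "(\<Sum>x\<in>state_space. \<Sum>y\<in>state_space. \<pi> x * K x y * ln (tensor n S P_marg x y / tensor n S L x y))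
      = (\<Sum>x\<in>state_space. \<Sum>y\<in>state_space. \<Sum>i\<in>{1..n}.
           \<pi> x * K x y * ln (P_marg i (restrict x (S i)) (restrict y (S i)) / L i (restrict x (S i)) (restrict y (S i))))"
    by (simp add: pointwise)
  also have "\<dots> = (\<Sum>i\<in>{1..n}. \<Sum>x\<in>state_space. \<Sum>y\<in>state_space.
           \<pi> x * K x y * ln (P_marg i (restrict x (S i)) (restrict y (S i)) / L i (restrict x (S i)) (restrict y (S i))))"
    by (subst sum.swap[of _ state_space "{1..n}"], subst sum.swap, rule refl)
  also have "\<dots> = (\<Sum>i\<in>{1..n}. \<Sum>u\<in>block_space i. \<Sum>v\<in>block_space i.
            pi_marg i u * kernel_marg i K u v * ln (P_marg i u v / L i u v))"
    by (intro sum.cong refl sum_restrict_eq_sum_marg[where h = "\<lambda>u v. ln (P_marg _ u v / L _ u v)"])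
  finally show ?thesis .
qed

lemma KL_tensor_eq_infinity:
  assumes i: "i \<in> {1..n}" and u: "u \<in> block_space i" and v: "v \<in> block_space i"
    and "P_marg i u v \<noteq> 0" and "L i u v = 0"
  shows "KL state_space \<pi> P (tensor n S L) = \<infinity>"
    and "KL state_space \<pi> (tensor n S P_marg) (tensor n S L) = \<infinity>"
    and "(\<Sum>k\<in>{1..n}. KL (block_space k) (pi_marg k) (P_marg k) (L k)) = \<infinity>"
proof -
  obtain x y where x: "x \<in> fibre i u" and y: "y \<in> fibre i v" and "P x y \<noteq> 0"
    using P_marg_nonzero_imp_P_nonzero[OF i u assms(4)] .
  then have xy: "x \<in> state_space" "y \<in> state_space" and P_ne: "\<pi> x * P x y \<noteq> 0"
    using pi_pos[of x] by auto
  have TPM_ne: "\<pi> x * tensor n S P_marg x y \<noteq> 0"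
    using pi_pos[OF xy(1)] tensor_P_marg_pos[OF xy \<open>P x y \<noteq> 0\<close>] by simp
  have TL_0: "tensor n S L x y = 0"
    using x y i assms(5) by (auto simp: tensor_eq_0_iff)
  show "KL state_space \<pi> P (tensor n S L) = \<infinity>"
    using P_ne TL_0 by (rule KL_eq_infinity[OF finite_state_space xy, of \<pi> P "tensor n S L"])
  show "KL state_space \<pi> (tensor n S P_marg) (tensor n S L) = \<infinity>"
    using TPM_ne TL_0 by (rule KL_eq_infinity[OF finite_state_space xy, of \<pi> "tensor n S P_marg" "tensor n S L"])
  have "KL (block_space i) (pi_marg i) (P_marg i) (L i) = \<infinity>"
    using pi_marg_pos[OF i u] assms(4,5) by (intro KL_eq_infinity[OF finite_block_space[OF i] u v]) auto
  then show "(\<Sum>k\<in>{1..n}. KL (block_space k) (pi_marg k) (P_marg k) (L k)) = \<infinity>"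
    using i by (auto simp: sum_Pinfty)
qed

lemma P_marg_rows: "k \<in> {1..n} \<Longrightarrow> u \<in> block_space k \<Longrightarrow> (\<Sum>w\<in>block_space k. P_marg k u w) = 1"
  using P_marg_trans_matrix by (simp add: trans_matrix_def)

context
  fixes L :: "nat \<Rightarrow> (nat \<Rightarrow> 'a) \<Rightarrow> (nat \<Rightarrow> 'a) \<Rightarrow> real"
  assumes abs_cont: "\<And>i u v. i \<in> {1..n} \<Longrightarrow> u \<in> block_space i \<Longrightarrow> v \<in> block_space i \<Longrightarrow>
      P_marg i u v \<noteq> 0 \<Longrightarrow> L i u v \<noteq> 0"
begin

lemma tensor_ne_0_if_tensor_P_marg_ne_0:
  "x \<in> state_space \<Longrightarrow> y \<in> state_space \<Longrightarrow> tensor n S P_marg x y \<noteq> 0 \<Longrightarrow> tensor n S L x y \<noteq> 0"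
  using abs_cont[OF _ restrict_in_block_space restrict_in_block_space] by (simp add: tensor_eq_0_iff)

lemma KL_real_tensor_P_marg_tensor:
  "KL_real state_space \<pi> (tensor n S P_marg) (tensor n S L)
     = (\<Sum>i\<in>{1..n}. KL_real (block_space i) (pi_marg i) (P_marg i) (L i))"
proof -
  have "KL_real state_space \<pi> (tensor n S P_marg) (tensor n S L)
      = (\<Sum>i\<in>{1..n}. \<Sum>u\<in>block_space i. \<Sum>v\<in>block_space i.
           pi_marg i u * kernel_marg i (tensor n S P_marg) u v * ln (P_marg i u v / L i u v))"
    unfolding KL_real_def by (rule sum_ln_tensor_ratio[OF abs_cont])
  also have "\<dots> = (\<Sum>i\<in>{1..n}. KL_real (block_space i) (pi_marg i) (P_marg i) (L i))"
    unfolding KL_real_def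
  proof (intro sum.cong refl)
    fix i u v assume "i \<in> {1..n}" "u \<in> block_space i" "v \<in> block_space i"
    then show "pi_marg i u * kernel_marg i (tensor n S P_marg) u v * ln (P_marg i u v / L i u v)
        = pi_marg i u * P_marg i u v * ln (P_marg i u v / L i u v)"
      using kernel_marg_tensor[OF _ _ _ P_marg_rows] by simp
  qed
  finally show ?thesis .
qed

lemma KL_real_P_tensor_split:
  "KL_real state_space \<pi> P (tensor n S L)
     = KL_real state_space \<pi> P (tensor n S P_marg)
       + (\<Sum>i\<in>{1..n}. KL_real (block_space i) (pi_marg i) (P_marg i) (L i))"
proof -
  have P_supp: "tensor n S P_marg x y \<noteq> 0" if "x \<in> state_space" "y \<in> state_space" "P x y \<noteq> 0" for x y
    using tensor_P_marg_pos[OF that] by simp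
  have "\<pi> x * P x y * ln (P x y / tensor n S L x y)
      = \<pi> x * P x y * ln (P x y / tensor n S P_marg x y)
        + \<pi> x * P x y * ln (tensor n S P_marg x y / tensor n S L x y)"
    if "x \<in> state_space" "y \<in> state_space" for x y
    using P_supp[OF that] tensor_ne_0_if_tensor_P_marg_ne_0[OF that]
    by (cases "P x y = 0") (simp_all add: ln_div algebra_simps)
  then have "KL_real state_space \<pi> P (tensor n S L)
      = KL_real state_space \<pi> P (tensor n S P_marg)
        + (\<Sum>x\<in>state_space. \<Sum>y\<in>state_space. \<pi> x * P x y * ln (tensor n S P_marg x y / tensor n S L x y))"
    unfolding KL_real_def by (simp add: sum.distrib)
  also have "(\<Sum>x\<in>state_space. \<Sum>y\<in>state_space. \<pi> x * P x y * ln (tensor n S P_marg x y / tensor n S L x y))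
      = (\<Sum>i\<in>{1..n}. KL_real (block_space i) (pi_marg i) (P_marg i) (L i))"
    unfolding KL_real_def by (rule sum_ln_tensor_ratio[OF abs_cont P_supp])
  finally show ?thesis .
qed

lemma KL_tensor_eq_ereal_KL_real:
  shows "KL state_space \<pi> P (tensor n S L)
           = ereal (KL_real state_space \<pi> P (tensor n S P_marg)
                    + (\<Sum>i\<in>{1..n}. KL_real (block_space i) (pi_marg i) (P_marg i) (L i)))"
    and "KL state_space \<pi> (tensor n S P_marg) (tensor n S L)
           = ereal (\<Sum>i\<in>{1..n}. KL_real (block_space i) (pi_marg i) (P_marg i) (L i))"
    and "(\<Sum>i\<in>{1..n}. KL (block_space i) (pi_marg i) (P_marg i) (L i))
           = ereal (\<Sum>i\<in>{1..n}. KL_real (block_space i) (pi_marg i) (P_marg i) (L i))"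
proof -
  have "KL state_space \<pi> P (tensor n S L) = ereal (KL_real state_space \<pi> P (tensor n S L))"
  proof (rule KL_eq_KL_real)
    fix x y assume x: "x \<in> state_space" and y: "y \<in> state_space" and "\<pi> x * P x y \<noteq> 0"
    then have "tensor n S P_marg x y \<noteq> 0"
      using tensor_P_marg_pos[OF x y] by simp
    then show "tensor n S L x y \<noteq> 0"
      by (rule tensor_ne_0_if_tensor_P_marg_ne_0[OF x y])
  qed
  then show "KL state_space \<pi> P (tensor n S L)
           = ereal (KL_real state_space \<pi> P (tensor n S P_marg)
                    + (\<Sum>i\<in>{1..n}. KL_real (block_space i) (pi_marg i) (P_marg i) (L i)))"
    by (simp only: KL_real_P_tensor_split)
  have "KL state_space \<pi> (tensor n S P_marg) (tensor n S L)
      = ereal (KL_real state_space \<pi> (tensor n S P_marg) (tensor n S L))"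
    by (rule KL_eq_KL_real, rule tensor_ne_0_if_tensor_P_marg_ne_0) auto
  then show "KL state_space \<pi> (tensor n S P_marg) (tensor n S L)
           = ereal (\<Sum>i\<in>{1..n}. KL_real (block_space i) (pi_marg i) (P_marg i) (L i))"
    by (simp only: KL_real_tensor_P_marg_tensor)
  have "KL (block_space i) (pi_marg i) (P_marg i) (L i) = ereal (KL_real (block_space i) (pi_marg i) (P_marg i) (L i))"
    if "i \<in> {1..n}" for i
    using abs_cont[OF that] by (intro KL_eq_KL_real) simp
  then show "(\<Sum>i\<in>{1..n}. KL (block_space i) (pi_marg i) (P_marg i) (L i))
           = ereal (\<Sum>i\<in>{1..n}. KL_real (block_space i) (pi_marg i) (P_marg i) (L i))"
    by simp
qed

end

lemma KL_tensor_decomposition: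
  shows "KL state_space \<pi> P (tensor n S L)
           = KL state_space \<pi> P (tensor n S P_marg) + KL state_space \<pi> (tensor n S P_marg) (tensor n S L)"
    and "KL state_space \<pi> (tensor n S P_marg) (tensor n S L)
           = (\<Sum>i\<in>{1..n}. KL (block_space i) (pi_marg i) (P_marg i) (L i))"
proof -
  have "KL state_space \<pi> P (tensor n S L)
          = KL state_space \<pi> P (tensor n S P_marg) + KL state_space \<pi> (tensor n S P_marg) (tensor n S L)
      \<and> KL state_space \<pi> (tensor n S P_marg) (tensor n S L)
          = (\<Sum>i\<in>{1..n}. KL (block_space i) (pi_marg i) (P_marg i) (L i))"
  proof (cases "\<exists>i\<in>{1..n}. \<exists>u\<in>block_space i. \<exists>v\<in>block_space i. P_marg i u v \<noteq> 0 \<and> L i u v = 0")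
    case True
    then obtain i u v where "i \<in> {1..n}" "u \<in> block_space i" "v \<in> block_space i"
      "P_marg i u v \<noteq> 0" "L i u v = 0"
      by blast
    from KL_tensor_eq_infinity[where L = L, OF this] show ?thesis
      unfolding KL_P_tensor_P_marg_eq_ereal by simp
  next
    case False
    then have "\<And>i u v. i \<in> {1..n} \<Longrightarrow> u \<in> block_space i \<Longrightarrow> v \<in> block_space i \<Longrightarrow>
        P_marg i u v \<noteq> 0 \<Longrightarrow> L i u v \<noteq> 0"
      by blast
    from KL_tensor_eq_ereal_KL_real[where L = L, OF this] show ?thesis
      unfolding KL_P_tensor_P_marg_eq_ereal by simp
  qed
  then show "KL state_space \<pi> P (tensor n S L)
           = KL state_space \<pi> P (tensor n S P_marg) + KL state_space \<pi> (tensor n S P_marg) (tensor n S L)"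
    and "KL state_space \<pi> (tensor n S P_marg) (tensor n S L)
           = (\<Sum>i\<in>{1..n}. KL (block_space i) (pi_marg i) (P_marg i) (L i))"
    by auto
qed

lemma
  assumes L_trans_matrix: "\<And>i. i \<in> {1..n} \<Longrightarrow> trans_matrix (block_space i) (L i)"
  shows KL_tensor_P_marg_le: "KL state_space \<pi> P (tensor n S P_marg) \<le> KL state_space \<pi> P (tensor n S L)"
    and KL_tensor_eq_imp_P_marg: "KL state_space \<pi> P (tensor n S L) = KL state_space \<pi> P (tensor n S P_marg) \<Longrightarrow>
           \<forall>i\<in>{1..n}. \<forall>u\<in>block_space i. \<forall>v\<in>block_space i. L i u v = P_marg i u v"
proof -
  let ?D = "\<lambda>i. KL (block_space i) (pi_marg i) (P_marg i) (L i)"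
  have D_nonneg: "0 \<le> ?D i" if "i \<in> {1..n}" for i
    using KL_nonneg[OF finite_block_space[OF that] pi_marg_pos[OF that] P_marg_trans_matrix[OF that]
        L_trans_matrix[OF that]] .
  have split: "KL state_space \<pi> P (tensor n S L) = KL state_space \<pi> P (tensor n S P_marg) + sum ?D {1..n}"
    using KL_tensor_decomposition[of L] by simp
  show "KL state_space \<pi> P (tensor n S P_marg) \<le> KL state_space \<pi> P (tensor n S L)"
    unfolding split using D_nonneg by (intro add_increasing2 sum_nonneg) auto
  assume "KL state_space \<pi> P (tensor n S L) = KL state_space \<pi> P (tensor n S P_marg)"
  then have "ereal (KL_real state_space \<pi> P (tensor n S P_marg)) + sum ?D {1..n}
      = ereal (KL_real state_space \<pi> P (tensor n S P_marg))"
    unfolding split KL_P_tensor_P_marg_eq_ereal .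
  then have sum_D_zero: "sum ?D {1..n} = 0"
    by (cases "sum ?D {1..n}") auto
  have D_zero: "?D i = 0" if "i \<in> {1..n}" for i
    by (rule sum_nonneg_0[of "{1..n}" ?D, OF finite_atLeastAtMost D_nonneg sum_D_zero that])
  show "\<forall>i\<in>{1..n}. \<forall>u\<in>block_space i. \<forall>v\<in>block_space i. L i u v = P_marg i u v"
  proof (intro ballI)
    fix i u v assume i: "i \<in> {1..n}" and "u \<in> block_space i" "v \<in> block_space i"
    then show "L i u v = P_marg i u v"
      using KL_eq_0_imp_eq[OF finite_block_space[OF i] pi_marg_pos[OF i] P_marg_trans_matrix[OF i]
          L_trans_matrix[OF i] D_zero[OF i]]
      by simp
  qed
qed

lemma KL_tensor_P_marg_eq_INF:
  "KL state_space \<pi> P (tensor n S P_marg)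
     = (INF L\<in>{L. \<forall>i\<in>{1..n}. trans_matrix (block_space i) (L i)}. KL state_space \<pi> P (tensor n S L))"
proof (rule antisym)
  show "KL state_space \<pi> P (tensor n S P_marg)
      \<le> (INF L\<in>{L. \<forall>i\<in>{1..n}. trans_matrix (block_space i) (L i)}. KL state_space \<pi> P (tensor n S L))"
    by (intro INF_greatest KL_tensor_P_marg_le) blast
  show "(INF L\<in>{L. \<forall>i\<in>{1..n}. trans_matrix (block_space i) (L i)}. KL state_space \<pi> P (tensor n S L))
      \<le> KL state_space \<pi> P (tensor n S P_marg)"
    using P_marg_trans_matrix by (intro INF_lower) blast
qed

end

theorem theorem2p22:
  fixes d n :: nat and X :: "nat \<Rightarrow> 'a set" and S :: "nat \<Rightarrow> nat set"
    and \<pi> :: "(nat \<Rightarrow> 'a) \<Rightarrow> real" and P :: "(nat \<Rightarrow> 'a) \<Rightarrow> (nat \<Rightarrow> 'a) \<Rightarrow> real"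
    and L :: "nat \<Rightarrow> (nat \<Rightarrow> 'a) \<Rightarrow> (nat \<Rightarrow> 'a) \<Rightarrow> real"
  assumes finX: "\<And>j. j \<in> {1..d} \<Longrightarrow> finite (X j)"
    and S_nonempty: "\<And>i. i \<in> {1..n} \<Longrightarrow> S i \<noteq> {}"
    and S_disj: "\<And>i k. i \<in> {1..n} \<Longrightarrow> k \<in> {1..n} \<Longrightarrow> i \<noteq> k \<Longrightarrow> S i \<inter> S k = {}"
    and S_cover: "(\<Union>i\<in>{1..n}. S i) = {1..d}"
    and pi_mass: "prob_mass (PiE {1..d} X) \<pi>"
    and pi_pos: "\<And>x. x \<in> PiE {1..d} X \<Longrightarrow> \<pi> x > 0"
    and P_tm: "trans_matrix (PiE {1..d} X) P"
    and L_tm: "\<And>i. i \<in> {1..n} \<Longrightarrow> trans_matrix (PiE (S i) X) (L i)"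
  defines "\<Omega> \<equiv> PiE {1..d} X"
    and "Pm \<equiv> (\<lambda>i. marg_P d X (S i) \<pi> P)"
  shows
    "KL \<Omega> \<pi> P (tensor n S L)
       = KL \<Omega> \<pi> P (tensor n S Pm) + KL \<Omega> \<pi> (tensor n S Pm) (tensor n S L)
     \<and> KL \<Omega> \<pi> (tensor n S Pm) (tensor n S L)
       = (\<Sum>i\<in>{1..n}. KL (PiE (S i) X) (marg_pi d X (S i) \<pi>) (Pm i) (L i))
     \<and> (\<forall>i\<in>{1..n}. trans_matrix (PiE (S i) X) (Pm i))
     \<and> (\<forall>L'. (\<forall>i\<in>{1..n}. trans_matrix (PiE (S i) X) (L' i)) \<longrightarrow>
           KL \<Omega> \<pi> P (tensor n S Pm) \<le> KL \<Omega> \<pi> P (tensor n S L')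
         \<and> (KL \<Omega> \<pi> P (tensor n S L') = KL \<Omega> \<pi> P (tensor n S Pm) \<longrightarrow>
              (\<forall>i\<in>{1..n}. \<forall>u\<in>PiE (S i) X. \<forall>v\<in>PiE (S i) X. L' i u v = Pm i u v)))
     \<and> KL \<Omega> \<pi> P (tensor n S Pm)
       = (INF L'\<in>{L'. \<forall>i\<in>{1..n}. trans_matrix (PiE (S i) X) (L' i)}. KL \<Omega> \<pi> P (tensor n S L'))"
proof -
  have "PiE {1..d} X \<noteq> {}"
    using pi_mass by (auto simp: prob_mass_def)
  then interpret block_kernel d n X S \<pi> P
    using finX S_disj S_cover pi_pos P_tm by unfold_locales
  have minimal: "KL \<Omega> \<pi> P (tensor n S Pm) \<le> KL \<Omega> \<pi> P (tensor n S L')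
      \<and> (KL \<Omega> \<pi> P (tensor n S L') = KL \<Omega> \<pi> P (tensor n S Pm) \<longrightarrow>
           (\<forall>i\<in>{1..n}. \<forall>u\<in>PiE (S i) X. \<forall>v\<in>PiE (S i) X. L' i u v = Pm i u v))"
    if "\<forall>i\<in>{1..n}. trans_matrix (PiE (S i) X) (L' i)" for L'
  proof -
    have "\<And>i. i \<in> {1..n} \<Longrightarrow> trans_matrix (PiE (S i) X) (L' i)"
      using that by blast
    from KL_tensor_P_marg_le[OF this] KL_tensor_eq_imp_P_marg[OF this] show ?thesis
      unfolding \<Omega>_def Pm_def by blast
  qed
  show ?thesis
    using KL_tensor_decomposition[of L] P_marg_trans_matrix minimal KL_tensor_P_marg_eq_INF
    unfolding \<Omega>_def Pm_def by blast
qed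

end
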